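(* Let $G=(V,E,\{w_j\})$ be a reduced instance of the line highway problem with $[s,\ell]$-valuation, and let $r=s/\ell$. Let $\boldsymbol{\tau}$ be the (random) price vector output by the algorithm Line_Cut described in the context. Then \[ \frac{\mathrm{Opt}_{\rm coup}(G)}{\mathbf{E}[\mathrm{Profit}_{\rm coup}(\boldsymbol{\tau})]}\le 4(1-\ln r), \] where the expectation is over the random choices of the algorithm.
   Context: For integers $a\le b$, $[a,b]=\{a,a+1,\dots,b\}$. A reduced instance of the line highway problem is $G=(V,E,\{w_j\})$ with $V=[1,n]$ (items) and a finite multiset $E=\{e_1,\dots,e_m\}$ of customers, each $e_j=[j_s,j_t]$ with $1\le j_s\le j_t\le n$, having valuation $w_j>0$; valuations are integers. It has $[s,\ell]$-valuation if $s=\min_j w_j$ and $\ell=\max_j w_j$. For a price vector $\mathbf p\in\mathbb R^n$ (prices may be negative), $p(e_j)=\sum_{i\in e_j}p_i$, the coupon-model profit is $\mathrm{Profit}_{\rm coup}(\mathbf p)=\sum_{j:\,w_j\ge p(e_j)}\max\{p(e_j),0\}$, and $\mathrm{Opt}_{\rm coup}(G)=\max_{\mathbf p}\mathrm{Profit}_{\rm coup}(\mathbf p)$. The DAG representation of $G$ has vertices $u_0,\dots,u_n$ and, for each $e_j=[j_s,j_t]$, an arc $u_{j_s-1}\to u_{j_t}$ of weight $w_j$; a partial-sum vector $(s_0,\dots,s_n)$ determines prices $p_i=s_i-s_{i-1}$. Algorithm Line_Cut: construct the DAG representation; mark each vertex independently with probability $1/2$; let $L$ be the marked and $R$ the unmarked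 vertices; for each integer $x\in[s,\ell]$ assign partial sum $0$ to all vertices of $L$ and $x$ to all vertices of $R$, obtaining a price vector $\boldsymbol\tau_x$; output a $\boldsymbol\tau$ among $\boldsymbol\tau_s,\dots,\boldsymbol\tau_\ell$ maximizing $\mathrm{Profit}_{\rm coup}$. *)

theory Defs
  imports Complex_Main
begin

text \<open>A customer is a triple (j_s, j_t, w_j): the interval [j_s, j_t] of items and its
  integer valuation. An instance is given by the number of items n and the list
  (multiset) of customers.\<close>

type_synonym customer = "nat \<times> nat \<times> int"

definition reduced_instance :: "nat \<Rightarrow> customer list \<Rightarrow> bool" where
  "reduced_instance n E \<longleftrightarrow>
     (\<forall>(a, b, w) \<in> set E. 1 \<le> a \<and> a \<le> b \<and> b \<le> n \<and> w > 0)"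

definition min_val :: "customer list \<Rightarrow> int" where
  "min_val E = Min ((\<lambda>(a, b, w). w) ` set E)"

definition max_val :: "customer list \<Rightarrow> int" where
  "max_val E = Max ((\<lambda>(a, b, w). w) ` set E)"

definition bundle_price :: "(nat \<Rightarrow> real) \<Rightarrow> nat \<Rightarrow> nat \<Rightarrow> real" where
  "bundle_price p a b = (\<Sum>i\<in>{a..b}. p i)"

definition profit_coup :: "customer list \<Rightarrow> (nat \<Rightarrow> real) \<Rightarrow> real" where
  "profit_coup E p =
     (\<Sum>(a, b, w) \<leftarrow> E. if real_of_int w \<ge> bundle_price p a b
                          then max (bundle_price p a b) 0 else 0)"

definition opt_coup :: "nat \<Rightarrow> customer list \<Rightarrow> real" where
  "opt_coup n E = (SUP p \<in> {p :: nat \<Rightarrow> real. \<forall>i. i \<notin> {1..n} \<longrightarrow> p i = 0}. profit_coup E p)"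

text \<open>Price vector obtained from partial sums: vertices u_k with k in L get partial sum 0,
  the others get x; p_i = s_i - s_(i-1).\<close>
definition cut_prices :: "nat \<Rightarrow> nat set \<Rightarrow> int \<Rightarrow> nat \<Rightarrow> real" where
  "cut_prices n L x i =
     (if i \<in> {1..n} then
        (if i \<in> L then 0 else real_of_int x) - (if i - 1 \<in> L then 0 else real_of_int x)
      else 0)"

text \<open>Profit of the output of Line_Cut for a fixed marking L (the marked vertex indices).\<close>
definition line_cut_profit :: "nat \<Rightarrow> customer list \<Rightarrow> nat set \<Rightarrow> real" where
  "line_cut_profit n E L =
     Max ((\<lambda>x. profit_coup E (cut_prices n L x)) ` {min_val E .. max_val E})"

text \<open>Expectation over the uniformly random marking of u_0,...,u_n (each marked
  independently with probability 1/2).\<close>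
definition expected_line_cut_profit :: "nat \<Rightarrow> customer list \<Rightarrow> real" where
  "expected_line_cut_profit n E =
     (\<Sum>L\<in>Pow {0..n}. line_cut_profit n E L) / 2 ^ (n + 1)"

end

theory Submission
  imports Defs
begin

text \<open>Write \<open>D(x)\<close> for the number of customers with valuation at least \<open>x\<close> and
  \<open>M = max\<^sub>x x D(x)\<close> over \<open>x \<in> [s,\<ell>]\<close>. The optimum is at most \<open>\<Sum>\<^sub>j w\<^sub>j = \<Sum>\<^sub>k D(k)\<close>; the
  terms with \<open>k \<le> s\<close> sum to \<open>s D(s) \<le> M\<close>, and each term with \<open>k > s\<close> is at most \<open>M/k\<close>, so the
  optimum is at most \<open>M (1 + ln (\<ell>/s))\<close>. Conversely, under \<open>\<tau>\<^sub>x\<close> the bundle \<open>[a,b]\<close> costs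
  \<open>x\<close> whenever \<open>u\<^sub>a\<^sub>-\<^sub>1\<close> is marked and \<open>u\<^sub>b\<close> is not, which happens with probability \<open>1/4\<close>;
  hence \<open>\<tau>\<^sub>x\<close> earns \<open>x D(x)/4\<close> in expectation, and the best \<open>x\<close> earns at least \<open>M/4\<close>.\<close>

definition pays :: "(nat \<Rightarrow> real) \<Rightarrow> customer \<Rightarrow> real" where
  "pays p c = (case c of (a, b, w) \<Rightarrow>
     if real_of_int w \<ge> bundle_price p a b then max (bundle_price p a b) 0 else 0)"

definition demand :: "customer list \<Rightarrow> int \<Rightarrow> real" where
  "demand E x = (\<Sum>(a, b, w) \<leftarrow> E. if x \<le> w then 1 else 0)"

lemma demand_eq_length:
  "\<forall>(a, b, w) \<in> set E. x \<le> w \<Longrightarrow> demand E x = real (length E)"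
  by (induction E) (auto simp: demand_def)

lemma profit_coup_eq_sum_pays: "profit_coup E p = (\<Sum>c \<leftarrow> E. pays p c)"
  by (simp add: profit_coup_def pays_def case_prod_unfold)

lemma pays_nonneg: "0 \<le> pays p c"
  by (simp add: pays_def split: prod.split)

lemma pays_le_valuation: "0 \<le> w \<Longrightarrow> pays p (a, b, w) \<le> real_of_int w"
  by (simp add: pays_def)

lemma sum_sum_list_swap:
  "(\<Sum>L\<in>A. \<Sum>c \<leftarrow> E. f c L) = (\<Sum>c \<leftarrow> E. \<Sum>L\<in>A. (f c L :: real))"
  by (induction E) (auto simp: sum.distrib)

lemma min_val_le:
  "(a, b, w) \<in> set E \<Longrightarrow> min_val E \<le> w"
  unfolding min_val_def by (rule Min_le) force+

lemma le_max_val: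
  "(a, b, w) \<in> set E \<Longrightarrow> w \<le> max_val E"
  unfolding max_val_def by (rule Max_ge) force+

lemma min_val_mem:
  assumes "E \<noteq> []"
  obtains a b where "(a, b, min_val E) \<in> set E"
proof -
  have "min_val E \<in> (\<lambda>(a, b, w). w) ` set E"
    unfolding min_val_def using assms by (intro Min_in) auto
  then show ?thesis using that by auto
qed

lemma opt_coup_le_total_valuation:
  assumes "\<forall>(a, b, w) \<in> set E. 0 \<le> w"
  shows "opt_coup n E \<le> (\<Sum>(a, b, w) \<leftarrow> E. real_of_int w)"
proof -
  have "profit_coup E p \<le> (\<Sum>(a, b, w) \<leftarrow> E. real_of_int w)" for p
    unfolding profit_coup_eq_sum_pays
    using assms pays_le_valuation by (intro sum_list_mono) auto
  then show ?thesis
    unfolding opt_coup_def by (intro cSUP_least) auto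
qed

lemma total_valuation_eq_sum_demand:
  assumes "\<forall>(a, b, w) \<in> set E. 0 \<le> w \<and> w \<le> l"
  shows "(\<Sum>(a, b, w) \<leftarrow> E. real_of_int w) = (\<Sum>k = 1..l. demand E k)"
proof -
  have "real_of_int w = (\<Sum>k = 1..l. if k \<le> w then 1 else 0)" if "0 \<le> w" "w \<le> l" for w
  proof -
    have "{k \<in> {1..l}. k \<le> w} = {1..w}" using that by auto
    then show ?thesis using that by (simp flip: sum.inter_filter)
  qed
  then have "(\<Sum>(a, b, w) \<leftarrow> E. real_of_int w)
      = (\<Sum>(a, b, w) \<leftarrow> E. \<Sum>k = 1..l. if k \<le> w then 1 else 0)"
    using assms by (intro arg_cong[where f = sum_list] map_cong) auto
  then show ?thesis
    unfolding demand_def by (simp add: sum_sum_list_swap case_prod_unfold)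
qed

lemma sum_inverse_le_ln_diff:
  fixes s l :: int
  assumes "1 \<le> s" "s \<le> l"
  shows "(\<Sum>k = s + 1..l. 1 / real_of_int k) \<le> ln (real_of_int l) - ln (real_of_int s)"
  using assms(2)
proof (induction l rule: int_ge_induct)
  case base
  then show ?case by simp
next
  case (step i)
  have i_pos: "0 < real_of_int i" using step.hyps assms by simp
  have "ln (real_of_int i / real_of_int (i + 1)) \<le> real_of_int i / real_of_int (i + 1) - 1"
    using i_pos by (intro ln_le_minus_one) simp
  then have "1 / real_of_int (i + 1) \<le> ln (real_of_int (i + 1)) - ln (real_of_int i)"
    using i_pos by (simp add: ln_div field_simps)
  moreover have "{s + 1..i + 1} = insert (i + 1) {s + 1..i}" using step.hyps by auto
  ultimately show ?case using step.IH by simp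
qed

lemma sum_le_revenue_bound:
  fixes f :: "int \<Rightarrow> real" and s l :: int
  assumes "1 \<le> s" "s \<le> l" "0 \<le> M"
    and flat: "\<forall>k \<in> {1..s}. f k \<le> f s"
    and revenue: "\<forall>k \<in> {s..l}. real_of_int k * f k \<le> M"
  shows "(\<Sum>k = 1..l. f k) \<le> M * (1 - ln (real_of_int s / real_of_int l))"
proof -
  have "(\<Sum>k = 1..s. f k) \<le> real (card {1..s}) * f s"
    using flat by (intro sum_bounded_above) auto
  also have "\<dots> \<le> M" using revenue assms(1,2) by simp
  finally have low: "(\<Sum>k = 1..s. f k) \<le> M" .
  have "(\<Sum>k = s + 1..l. f k) \<le> (\<Sum>k = s + 1..l. M * (1 / real_of_int k))"
  proof (rule sum_mono)
    fix k assume k: "k \<in> {s + 1..l}"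
    then have "real_of_int k * f k \<le> M" "0 < real_of_int k" using revenue assms(1) by auto
    then show "f k \<le> M * (1 / real_of_int k)" by (simp add: field_simps mult.commute)
  qed
  also have "\<dots> = M * (\<Sum>k = s + 1..l. 1 / real_of_int k)"
    by (simp add: sum_distrib_left)
  also have "\<dots> \<le> M * (ln (real_of_int l) - ln (real_of_int s))"
    using sum_inverse_le_ln_diff[OF assms(1,2)] assms(3) by (rule mult_left_mono)
  finally have high: "(\<Sum>k = s + 1..l. f k) \<le> M * (ln (real_of_int l) - ln (real_of_int s))" .
  have "{1..l} = {1..s} \<union> {s + 1..l}" using assms(1,2) by auto
  then have "(\<Sum>k = 1..l. f k) = (\<Sum>k = 1..s. f k) + (\<Sum>k = s + 1..l. f k)"
    by (simp add: sum.union_disjoint)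
  also have "\<dots> \<le> M * (1 - ln (real_of_int s / real_of_int l))"
    using low high assms(1,2) by (simp add: ln_div algebra_simps)
  finally show ?thesis .
qed

lemma bundle_price_cut_prices:
  assumes "1 \<le> a" "a \<le> b" "b \<le> n"
  shows "bundle_price (cut_prices n L x) a b =
     (if b \<in> L then 0 else real_of_int x) - (if a - 1 \<in> L then 0 else real_of_int x)"
  using assms(2,3)
proof (induction b rule: dec_induct)
  case base
  then show ?case using assms(1) by (simp add: bundle_price_def cut_prices_def)
next
  case (step k)
  have "bundle_price (cut_prices n L x) a (Suc k) =
      bundle_price (cut_prices n L x) a k + cut_prices n L x (Suc k)"
    using step.hyps by (simp add: bundle_price_def atLeastAtMostSuc_conv)
  moreover have "cut_prices n L x (Suc k) =
      (if Suc k \<in> L then 0 else real_of_int x) - (if k \<in> L then 0 else real_of_int x)"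
    using step.prems by (simp add: cut_prices_def)
  ultimately show ?case using step by simp
qed

lemma card_Pow_separating:
  assumes "finite A" "u \<in> A" "v \<in> A" "u \<noteq> v"
  shows "card {L \<in> Pow A. u \<in> L \<and> v \<notin> L} = 2 ^ (card A - 2)"
proof -
  have "bij_betw (insert u) (Pow (A - {u, v})) {L \<in> Pow A. u \<in> L \<and> v \<notin> L}"
    by (rule bij_betw_byWitness[where f' = "\<lambda>L. L - {u}"]) (use assms in auto)
  then have "card {L \<in> Pow A. u \<in> L \<and> v \<notin> L} = card (Pow (A - {u, v}))"
    by (simp add: bij_betw_same_card)
  also have "\<dots> = 2 ^ card (A - {u, v})"
    using assms(1) by (simp add: card_Pow)
  also have "card (A - {u, v}) = card A - 2"
    using assms by (subst card_Diff_subset) auto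
  finally show ?thesis .
qed

lemma sum_pays_cut_prices_ge:
  assumes "1 \<le> a" "a \<le> b" "b \<le> n" "0 < x"
  shows "2 ^ (n - 1) * real_of_int x * (if x \<le> w then 1 else 0)
           \<le> (\<Sum>L \<in> Pow {0..n}. pays (cut_prices n L x) (a, b, w))"
proof (cases "x \<le> w")
  case True
  define S where "S = {L \<in> Pow {0..n}. a - 1 \<in> L \<and> b \<notin> L}"
  have "card S = 2 ^ (n - 1)"
    unfolding S_def using assms by (subst card_Pow_separating) auto
  then have "2 ^ (n - 1) * real_of_int x = (\<Sum>L \<in> S. real_of_int x)" by simp
  also have "\<dots> \<le> (\<Sum>L \<in> S. pays (cut_prices n L x) (a, b, w))"
    using True assms by (intro sum_mono) (auto simp: S_def pays_def bundle_price_cut_prices)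
  also have "\<dots> \<le> (\<Sum>L \<in> Pow {0..n}. pays (cut_prices n L x) (a, b, w))"
    by (intro sum_mono2) (auto simp: S_def pays_nonneg)
  finally show ?thesis using True by simp
qed (simp add: sum_nonneg pays_nonneg)

lemma sum_profit_cut_prices_ge:
  assumes "reduced_instance n E" "0 < x"
  shows "2 ^ (n - 1) * real_of_int x * demand E x
           \<le> (\<Sum>L \<in> Pow {0..n}. profit_coup E (cut_prices n L x))"
proof -
  have "2 ^ (n - 1) * real_of_int x * demand E x
      = (\<Sum>(a, b, w) \<leftarrow> E. 2 ^ (n - 1) * real_of_int x * (if x \<le> w then 1 else 0))"
    unfolding demand_def by (simp add: sum_list_const_mult case_prod_unfold)
  also have "\<dots> \<le> (\<Sum>c \<leftarrow> E. \<Sum>L \<in> Pow {0..n}. pays (cut_prices n L x) c)"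
    using assms sum_pays_cut_prices_ge
    by (intro sum_list_mono) (auto simp: reduced_instance_def)
  also have "\<dots> = (\<Sum>L \<in> Pow {0..n}. profit_coup E (cut_prices n L x))"
    by (simp add: profit_coup_eq_sum_pays sum_sum_list_swap)
  finally show ?thesis .
qed

lemma expected_line_cut_profit_ge:
  assumes "reduced_instance n E" "1 \<le> n" "x \<in> {min_val E..max_val E}" "0 < x"
  shows "real_of_int x * demand E x / 4 \<le> expected_line_cut_profit n E"
proof -
  have "(\<Sum>L \<in> Pow {0..n}. profit_coup E (cut_prices n L x))
      \<le> (\<Sum>L \<in> Pow {0..n}. line_cut_profit n E L)"
    unfolding line_cut_profit_def using assms(3) by (intro sum_mono Max_ge) auto
  moreover have "(2::real) ^ (n + 1) = 4 * 2 ^ (n - 1)"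
  proof -
    have "n + 1 = Suc (Suc (n - 1))" using assms(2) by simp
    then show ?thesis by (simp only: power_Suc)
  qed
  ultimately show ?thesis
    using sum_profit_cut_prices_ge[OF assms(1,4)]
    unfolding expected_line_cut_profit_def by (simp add: field_simps)
qed

theorem theorem2:
  fixes n :: nat and E :: "customer list"
  assumes "reduced_instance n E"
    and "E \<noteq> []"
  shows "opt_coup n E / expected_line_cut_profit n E
           \<le> 4 * (1 - ln (real_of_int (min_val E) / real_of_int (max_val E)))"
proof -
  define s l where "s = min_val E" and "l = max_val E"
  define R where "R = 1 - ln (real_of_int s / real_of_int l)"
  define M where "M = Max ((\<lambda>x. real_of_int x * demand E x) ` {s..l})"
  obtain a b where ab: "(a, b, s) \<in> set E"
    using min_val_mem[OF assms(2)] unfolding s_def .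
  have customer_bounds: "s \<le> w \<and> w \<le> l \<and> 1 \<le> a \<and> a \<le> b \<and> b \<le> n \<and> 0 < w"
    if "(a, b, w) \<in> set E" for a b w
    using that assms(1) min_val_le le_max_val unfolding s_def l_def reduced_instance_def by fast
  have "1 \<le> s" "s \<le> l" "1 \<le> n" using customer_bounds[OF ab] by auto
  have demand_s: "demand E k = real (length E)" if "k \<le> s" for k
    using customer_bounds that by (intro demand_eq_length) force
  have revenue: "real_of_int k * demand E k \<le> M" if "k \<in> {s..l}" for k
    unfolding M_def using that by (intro Max_ge) auto
  have "0 < real_of_int s * demand E s"
    using demand_s[of s] \<open>1 \<le> s\<close> assms(2) by simp
  then have "0 < M" using revenue[of s] \<open>s \<le> l\<close> by fastforce
  have valuations: "\<forall>(a, b, w) \<in> set E. 0 \<le> w \<and> w \<le> l" using customer_bounds by fastforce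
  have "opt_coup n E \<le> (\<Sum>(a, b, w) \<leftarrow> E. real_of_int w)"
    using valuations by (intro opt_coup_le_total_valuation) auto
  also have "\<dots> = (\<Sum>k = 1..l. demand E k)"
    using valuations by (rule total_valuation_eq_sum_demand)
  also have "\<dots> \<le> M * R"
    unfolding R_def using \<open>1 \<le> s\<close> \<open>s \<le> l\<close> less_imp_le[OF \<open>0 < M\<close>]
    by (rule sum_le_revenue_bound) (simp_all add: demand_s revenue)
  finally have opt: "opt_coup n E \<le> M * R" .
  have "M \<in> (\<lambda>x. real_of_int x * demand E x) ` {s..l}"
    unfolding M_def using \<open>s \<le> l\<close> by (intro Max_in) auto
  then obtain x where x: "x \<in> {s..l}" "M = real_of_int x * demand E x" by blast
  have exp: "M / 4 \<le> expected_line_cut_profit n E"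
    using expected_line_cut_profit_ge[OF assms(1) \<open>1 \<le> n\<close>] x \<open>1 \<le> s\<close> by (simp add: s_def l_def)
  have "1 \<le> R"
    unfolding R_def using \<open>1 \<le> s\<close> \<open>s \<le> l\<close> by (simp add: ln_le_zero_iff)
  have "opt_coup n E / expected_line_cut_profit n E \<le> M * R / (M / 4)"
    using opt exp \<open>0 < M\<close> \<open>1 \<le> R\<close> by (intro frac_le) auto
  then show ?thesis using \<open>0 < M\<close> by (simp add: R_def s_def l_def)
qed

end
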